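(* Consider any run of shadow moat growing on $(G,t)$ with final growth values $(y_S)$, and any forest $F$ in $G$. Then $$\sum_{S\subseteq V:\ S\odot F} y_S\ \le\ c(F)-\frac{\mathrm{UM}(F)}{2}.$$
   Context: $G=(V,E,c)$ is an undirected graph with edge costs $c\ge0$; $\delta(S)$ is the set of edges with exactly one endpoint in $S$; $c(F)=\sum_{e\in F}c_e$. Shadow moat growing on $(G,t)$, $t:V\to\mathbb{R}_{\ge0}$: continuous process in time maintaining a forest (initially empty), its components, and $y_S\ge0$ (initially $0$); at time $\tau$ a component $C$ is active iff some $w\in C$ has $t_w>\tau$, and each active $C$ increases $y_C$ at rate $1$; an edge $e$ between different components with $\sum_{S:e\in\delta(S)}y_S=c_e$ is added and the components merge; stop when nothing is active. In every run $\sum_{S:e\in\delta(S)}y_S\le c_e$ for all edges. For sets $S,A\subseteq V$, $S\odot A$ means $S\cap A\ne\emptyset$ and $A\not\subseteq S$; for a forest $F$, $S\odot F$ means $S\odot V(K)$ for at least one connected component $K$ of $F$. For a forest $F$: $\mathrm{UC}(F)=\sum_{e\in F}\big(c_e-\sum_{S:e\in\delta(S)}y_S\big)$; $\mathrm{MC}(F)=\sum_{S:\,|\delta(S)\cap F|\ge2}|\delta(S)\cap F|\,y_S$; $\mathrm{UM}(F)=\mathrm{UC}(F)+\mathrm{MC}(F)$. *)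

theory Defs
  imports Main "HOL-Library.Extended_Real"
begin

(* Graph: vertex set V :: 'a set, edge set E :: 'e set, endpoint map
   ends :: 'e => 'a set (each edge has exactly two endpoints in V),
   costs c :: 'e => real.  Parallel edges are allowed. *)

definition cut :: "('e \<Rightarrow> 'a set) \<Rightarrow> 'e set \<Rightarrow> 'a set \<Rightarrow> 'e set" where
  "cut ends E S = {e \<in> E. card (ends e \<inter> S) = 1}"

definition adj :: "('e \<Rightarrow> 'a set) \<Rightarrow> 'e set \<Rightarrow> ('a \<times> 'a) set" where
  "adj ends F = {(u, v). \<exists>e\<in>F. ends e = {u, v}}"

definition comp :: "'a set \<Rightarrow> ('e \<Rightarrow> 'a set) \<Rightarrow> 'e set \<Rightarrow> 'a \<Rightarrow> 'a set" where
  "comp V ends F v = {u \<in> V. (v, u) \<in> (adj ends F)\<^sup>*}"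

definition comps :: "'a set \<Rightarrow> ('e \<Rightarrow> 'a set) \<Rightarrow> 'e set \<Rightarrow> 'a set set" where
  "comps V ends F = comp V ends F ` V"

definition is_cycle :: "('e \<Rightarrow> 'a set) \<Rightarrow> 'e set \<Rightarrow> 'e list \<Rightarrow> 'a list \<Rightarrow> bool" where
  "is_cycle ends F es vs \<longleftrightarrow>
     es \<noteq> [] \<and> length vs = length es + 1 \<and> hd vs = last vs \<and>
     distinct es \<and> distinct (tl vs) \<and> set es \<subseteq> F \<and>
     (\<forall>i < length es. ends (es ! i) = {vs ! i, vs ! Suc i})"

definition is_forest :: "('e \<Rightarrow> 'a set) \<Rightarrow> 'e set \<Rightarrow> 'e set \<Rightarrow> bool" where
  "is_forest ends E F \<longleftrightarrow> F \<subseteq> E \<and> \<not> (\<exists>es vs. is_cycle ends F es vs)"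

definition load :: "'a set \<Rightarrow> ('e \<Rightarrow> 'a set) \<Rightarrow> 'e set \<Rightarrow> ('a set \<Rightarrow> real) \<Rightarrow> 'e \<Rightarrow> real" where
  "load V ends E y e = (\<Sum>S \<in> {S. S \<subseteq> V \<and> e \<in> cut ends E S}. y S)"

definition active :: "('a \<Rightarrow> real) \<Rightarrow> real \<Rightarrow> 'a set \<Rightarrow> bool" where
  "active t \<tau> C \<longleftrightarrow> (\<exists>w\<in>C. t w > \<tau>)"

definition crossing :: "'a set \<Rightarrow> ('e \<Rightarrow> 'a set) \<Rightarrow> 'e set \<Rightarrow> 'e \<Rightarrow> bool" where
  "crossing V ends F e \<longleftrightarrow> (\<exists>u v. ends e = {u, v} \<and> comp V ends F u \<noteq> comp V ends F v)"

(* Reachable states (time, current forest, current y) of shadow moat growing.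
   grow: all currently active components grow at rate 1 for duration d, during which
         no terminal deadline t_w is crossed (so the set of active components is constant),
         allowed only if no tight edge between different components is pending, and
         without violating any edge constraint (so it stops at the first moment an edge
         becomes tight);
   add:  a tight edge between different components is added (one at a time; ties in any order). *)
inductive smg_reach :: "'a set \<Rightarrow> 'e set \<Rightarrow> ('e \<Rightarrow> 'a set) \<Rightarrow> ('e \<Rightarrow> real) \<Rightarrow> ('a \<Rightarrow> real)
    \<Rightarrow> real \<Rightarrow> 'e set \<Rightarrow> ('a set \<Rightarrow> real) \<Rightarrow> bool"
  for V E ends c t where
  init: "smg_reach V E ends c t 0 {} (\<lambda>S. 0)"
| grow: "smg_reach V E ends c t \<tau> F y \<Longrightarrow> d \<ge> 0 \<Longrightarrow>
         (\<forall>w\<in>V. t w \<le> \<tau> \<or> t w \<ge> \<tau> + d) \<Longrightarrow>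
         \<not> (\<exists>e\<in>E. crossing V ends F e \<and> load V ends E y e = c e) \<Longrightarrow>
         y' = (\<lambda>S. if S \<in> comps V ends F \<and> active t \<tau> S then y S + d else y S) \<Longrightarrow>
         (\<forall>e\<in>E. load V ends E y' e \<le> c e) \<Longrightarrow>
         smg_reach V E ends c t (\<tau> + d) F y'"
| add: "smg_reach V E ends c t \<tau> F y \<Longrightarrow> e \<in> E \<Longrightarrow> crossing V ends F e \<Longrightarrow>
        load V ends E y e = c e \<Longrightarrow>
        smg_reach V E ends c t \<tau> (insert e F) y"

definition smg_final :: "'a set \<Rightarrow> 'e set \<Rightarrow> ('e \<Rightarrow> 'a set) \<Rightarrow> ('e \<Rightarrow> real) \<Rightarrow> ('a \<Rightarrow> real)
    \<Rightarrow> ('a set \<Rightarrow> real) \<Rightarrow> bool" where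
  "smg_final V E ends c t y \<longleftrightarrow>
     (\<exists>\<tau> Fr. smg_reach V E ends c t \<tau> Fr y \<and> (\<forall>C\<in>comps V ends Fr. \<not> active t \<tau> C))"

definition odot :: "'a set \<Rightarrow> 'a set \<Rightarrow> bool" where
  "odot S A \<longleftrightarrow> S \<inter> A \<noteq> {} \<and> \<not> A \<subseteq> S"

(* S \<odot> F for a forest F (components taken in (V, F); singleton components never qualify) *)
definition odotF :: "'a set \<Rightarrow> ('e \<Rightarrow> 'a set) \<Rightarrow> 'a set \<Rightarrow> 'e set \<Rightarrow> bool" where
  "odotF V ends S F \<longleftrightarrow> (\<exists>K\<in>comps V ends F. odot S K)"

definition UC where
  "UC V ends E c y F = (\<Sum>e\<in>F. c e - load V ends E y e)"

definition MC where
  "MC V ends E y F = (\<Sum>S \<in> {S. S \<subseteq> V \<and> card (cut ends E S \<inter> F) \<ge> 2}.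
                        real (card (cut ends E S \<inter> F)) * y S)"

definition UM where
  "UM V ends E c y F = UC V ends E c y F + MC V ends E y F"

end

theory Submission
  imports Defs
begin

text \<open>
  Every set \<open>S\<close> with \<open>S \<odot> F\<close> separates two vertices of one component of \<open>F\<close>, so some edge of
  \<open>F\<close> crosses it: \<open>d\<^sub>S = |\<delta>(S) \<inter> F| \<ge> 1\<close>. Exchanging summations,
  \<open>c(F) = UC(F) + \<Sum>\<^sub>S d\<^sub>S y\<^sub>S\<close>, hence \<open>c(F) - UM(F)/2 = UC(F)/2 + \<Sum>\<^sub>S (d\<^sub>S - [d\<^sub>S \<ge> 2] d\<^sub>S/2) y\<^sub>S\<close>,
  and each coefficient is at least \<open>1\<close> when \<open>S \<odot> F\<close>. Only dual feasibility of \<open>y\<close>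
  (\<open>y \<ge> 0\<close>, loads at most costs) is needed, and moat growing maintains it.
\<close>

lemma smg_reach_dual_feasible:
  assumes "smg_reach V E ends c t \<tau> F y" and "\<forall>e\<in>E. c e \<ge> 0"
  shows "(\<forall>S. y S \<ge> 0) \<and> (\<forall>e\<in>E. load V ends E y e \<le> c e)"
  using assms
proof (induction rule: smg_reach.induct)
  case init
  then show ?case by (simp add: load_def)
qed auto

lemma rtrancl_adj_sym:
  assumes "(u, v) \<in> (adj ends F)\<^sup>*"
  shows "(v, u) \<in> (adj ends F)\<^sup>*"
proof -
  have "sym (adj ends F)"
    unfolding adj_def sym_def by (auto simp: insert_commute)
  then show ?thesis
    using assms by (metis sym_rtrancl symD)
qed

lemma rtrancl_adj_leaves_set:
  assumes "(u, w) \<in> (adj ends F)\<^sup>*" and "u \<in> S" and "w \<notin> S"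
  obtains a b where "a \<in> S" "b \<notin> S" "(a, b) \<in> adj ends F"
  using assms
proof (induction arbitrary: thesis rule: rtrancl_induct)
  case (step b c)
  then show ?case by (cases "b \<in> S") auto
qed simp

lemma odotF_cut_nonempty:
  assumes "odotF V ends S F" and "F \<subseteq> E"
  shows "cut ends E S \<inter> F \<noteq> {}"
proof -
  from assms(1) obtain v where "odot S (comp V ends F v)"
    unfolding odotF_def comps_def by auto
  then obtain u w where u: "u \<in> S" "(v, u) \<in> (adj ends F)\<^sup>*"
    and w: "w \<notin> S" "(v, w) \<in> (adj ends F)\<^sup>*"
    unfolding odot_def comp_def by auto
  have "(u, w) \<in> (adj ends F)\<^sup>*"
    using rtrancl_adj_sym[OF u(2)] w(2) by simp
  then obtain a b where ab: "a \<in> S" "b \<notin> S" "(a, b) \<in> adj ends F"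
    using u(1) w(1) by (rule rtrancl_adj_leaves_set)
  then obtain e where e: "e \<in> F" "ends e = {a, b}"
    unfolding adj_def by auto
  then have "ends e \<inter> S = {a}"
    using ab by auto
  then have "e \<in> cut ends E S"
    using e assms(2) unfolding cut_def by auto
  then show ?thesis
    using e by auto
qed

lemma sum_load_eq_sum_cut_card:
  assumes "finite V" and "finite F"
  shows "(\<Sum>e\<in>F. load V ends E y e) = (\<Sum>S\<in>Pow V. real (card (cut ends E S \<inter> F)) * y S)"
proof -
  have "(\<Sum>e\<in>F. load V ends E y e) = (\<Sum>e\<in>F. \<Sum>S\<in>Pow V. if e \<in> cut ends E S then y S else 0)"
    unfolding load_def
    by (rule sum.cong[OF refl], subst sum.inter_filter[symmetric]) (auto simp: assms intro!: sum.cong)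
  also have "\<dots> = (\<Sum>S\<in>Pow V. \<Sum>e\<in>F. if e \<in> cut ends E S then y S else 0)"
    by (rule sum.swap)
  also have "\<dots> = (\<Sum>S\<in>Pow V. real (card (cut ends E S \<inter> F)) * y S)"
    using assms(2) by (simp add: sum.If_cases Int_def conj_commute)
  finally show ?thesis .
qed

lemma sum_odotF_eq_sum_Pow:
  assumes "finite V"
  shows "(\<Sum>S \<in> {S. S \<subseteq> V \<and> odotF V ends S F}. y S)
           = (\<Sum>S\<in>Pow V. if odotF V ends S F then y S else 0)"
  by (subst sum.inter_filter[symmetric]) (auto simp: assms intro!: sum.cong)

lemma MC_eq_sum_Pow:
  assumes "finite V"
  shows "MC V ends E y F = (\<Sum>S\<in>Pow V. if real (card (cut ends E S \<inter> F)) \<ge> 2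
                                         then real (card (cut ends E S \<inter> F)) * y S else 0)"
  unfolding MC_def
  by (subst sum.inter_filter[symmetric]) (auto simp: assms intro!: sum.cong)

lemma indicator_le_halved_multiplicity:
  fixes d x :: real
  assumes "x \<ge> 0" and "d \<ge> 0" and "P \<Longrightarrow> d \<ge> 1"
  shows "(if P then x else 0) \<le> d * x - (if d \<ge> 2 then d * x / 2 else 0)"
proof (cases "d \<ge> 2")
  case True
  have "x \<le> d * x / 2"
    using mult_right_mono[OF True assms(1)] by simp
  then show ?thesis
    using True assms(1) by auto
next
  case False
  have "0 \<le> d * x" and "P \<Longrightarrow> x \<le> d * x"
    using assms mult_right_mono[of 1 d x] by auto
  then show ?thesis
    using False assms(1) by auto
qed

lemma odotF_sum_le_of_feasible:
  assumes "finite V" and "finite F" and "F \<subseteq> E"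
    and nonneg: "\<And>S. y S \<ge> 0"
    and feasible: "\<And>e. e \<in> F \<Longrightarrow> load V ends E y e \<le> c e"
  shows "(\<Sum>S \<in> {S. S \<subseteq> V \<and> odotF V ends S F}. y S)
           \<le> (\<Sum>e\<in>F. c e) - UM V ends E c y F / 2"
proof -
  define d where "d S = real (card (cut ends E S \<inter> F))" for S
  have "UC V ends E c y F \<ge> 0"
    unfolding UC_def using feasible by (intro sum_nonneg) auto
  have "(\<Sum>e\<in>F. c e) = UC V ends E c y F + (\<Sum>S\<in>Pow V. d S * y S)"
    unfolding UC_def d_def sum_load_eq_sum_cut_card[OF assms(1,2), symmetric]
    by (simp add: sum_subtractf)
  moreover have "MC V ends E y F / 2 = (\<Sum>S\<in>Pow V. if d S \<ge> 2 then d S * y S / 2 else 0)"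
    unfolding MC_eq_sum_Pow[OF assms(1)] d_def sum_divide_distrib by (rule sum.cong) auto
  ultimately have "(\<Sum>e\<in>F. c e) - UM V ends E c y F / 2
      = UC V ends E c y F / 2 + (\<Sum>S\<in>Pow V. d S * y S - (if d S \<ge> 2 then d S * y S / 2 else 0))"
    unfolding UM_def sum_subtractf by (simp add: field_simps)
  moreover have "odotF V ends S F \<Longrightarrow> d S \<ge> 1" for S
    using odotF_cut_nonempty[OF _ assms(3), where S = S] assms(2)
    unfolding d_def by (simp add: Suc_le_eq card_gt_0_iff)
  then have "(\<Sum>S\<in>Pow V. if odotF V ends S F then y S else 0)
      \<le> (\<Sum>S\<in>Pow V. d S * y S - (if d S \<ge> 2 then d S * y S / 2 else 0))"
    by (intro sum_mono indicator_le_halved_multiplicity) (auto simp: nonneg d_def)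
  ultimately show ?thesis
    unfolding sum_odotF_eq_sum_Pow[OF assms(1)] using \<open>UC V ends E c y F \<ge> 0\<close> by linarith
qed

theorem mainTheorem10:
  fixes V :: "'a set" and E :: "'e set" and ends :: "'e \<Rightarrow> 'a set"
    and c :: "'e \<Rightarrow> real" and t :: "'a \<Rightarrow> real"
    and y :: "'a set \<Rightarrow> real" and F :: "'e set"
  assumes "finite V" and "finite E"
    and "\<forall>e\<in>E. ends e \<subseteq> V \<and> card (ends e) = 2"
    and "\<forall>e\<in>E. c e \<ge> 0" and "\<forall>v\<in>V. t v \<ge> 0"
    and "smg_final V E ends c t y"
    and "is_forest ends E F"
  shows "(\<Sum>S \<in> {S. S \<subseteq> V \<and> odotF V ends S F}. y S)
           \<le> (\<Sum>e\<in>F. c e) - UM V ends E c y F / 2"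
proof -
  from assms(6) obtain \<tau> Fr where "smg_reach V E ends c t \<tau> Fr y"
    unfolding smg_final_def by auto
  from smg_reach_dual_feasible[OF this assms(4)]
  have "\<And>S. y S \<ge> 0" and "\<And>e. e \<in> E \<Longrightarrow> load V ends E y e \<le> c e"
    by auto
  moreover have "F \<subseteq> E"
    using assms(7) unfolding is_forest_def by simp
  ultimately show ?thesis
    using odotF_sum_le_of_feasible[OF assms(1) finite_subset[OF _ assms(2)]] by blast
qed

end
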